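(* Let $n\ge2$, $A\in\mathbb{R}^{n\times n}$, $B\in\mathbb{R}^n$ with $B\neq0$, and $\mu\in\mathbb{R}$. Let $q\in\mathbb{R}^n$ be a unit vector with $(A-\mu I)q\in\operatorname{span}\{B\}$ and let $Q\in\mathbb{R}^{n\times(n-1)}$ be such that $(q\;\;Q)$ is orthogonal. Put $\bar A=Q^TAQ$, $\bar B=Q^TB$ and $$K_o=\frac{B^T}{B^TB}(A-\mu I)\,qq^T .$$ Then for every $\bar K\in\mathbb{R}^{1\times(n-1)}$ and every $\lambda$, $$\det\big(\lambda I_n-A+B(K_o+\bar KQ^T)\big)=(\lambda-\mu)\,\det\big(\lambda I_{n-1}-\bar A+\bar B\bar K\big).$$ Consequently, if $\bar K$ gives $\bar A-\bar B\bar K$ the eigenvalues $\lambda_2,\dots,\lambda_n$, then $K_o+\bar KQ^T$ gives $A-B(K_o+\bar KQ^T)$ the eigenvalues $\mu,\lambda_2,\dots,\lambda_n$. *)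

theory Defs
  imports "Jordan_Normal_Form.Char_Poly"
begin

definition colm :: "real vec \<Rightarrow> real mat" where
  "colm v = mat_of_cols (dim_vec v) [v]"

definition rowm :: "real vec \<Rightarrow> real mat" where
  "rowm v = mat_of_rows (dim_vec v) [v]"

end

theory Submission
  imports Defs
begin

(*
  From (A - mu I) q = c B one gets Ko = c q^T, and with K = c q^T + Kbar Q^T the orthonormality
  of (q Q) gives K q = c and K Q = Kbar. Hence (A - B K) q = mu q: q stays an eigenvector of
  the closed loop. Conjugating lam I - A + B K by the orthogonal matrix (q Q) therefore gives a
  block upper triangular matrix with diagonal blocks lam - mu and
  Q^T (lam I - A + B K) Q = lam I - Abar + Bbar Kbar, whose determinants multiply.
*)

lemma transpose_mult_mult_index:
  fixes X M Y :: "'a :: comm_ring_1 mat"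
  assumes X: "X \<in> carrier_mat n k" and M: "M \<in> carrier_mat n n" and Y: "Y \<in> carrier_mat n l"
    and i: "i < k" and j: "j < l"
  shows "(transpose_mat X * M * Y) $$ (i, j) = col X i \<bullet> (M *\<^sub>v col Y j)"
proof -
  have "transpose_mat X * M * Y = transpose_mat X * (M * Y)"
    using X M Y by (intro assoc_mult_mat) auto
  thus ?thesis using X M Y i j by (simp add: mult_mat_vec_def)
qed

lemma orthogonal_mat_cols:
  fixes P :: "'a :: comm_ring_1 mat"
  assumes P: "P \<in> carrier_mat n n" and orth: "transpose_mat P * P = 1\<^sub>m n"
    and i: "i < n" and j: "j < n"
  shows "col P i \<bullet> col P j = (if i = j then 1 else 0)"
proof -
  have "(transpose_mat P * P) $$ (i, j) = col P i \<bullet> col P j" using P i j by simp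
  with orth i j show ?thesis by simp
qed

lemma scalar_prod_self_eq_0_iff:
  fixes v :: "'a :: linordered_idom vec"
  shows "v \<bullet> v = 0 \<longleftrightarrow> v = 0\<^sub>v (dim_vec v)"
proof
  assume "v \<bullet> v = 0"
  then have "\<forall>i\<in>{0..<dim_vec v}. v $ i * v $ i = 0"
    by (subst sum_nonneg_eq_0_iff[symmetric]) (auto simp: scalar_prod_def)
  then show "v = 0\<^sub>v (dim_vec v)" by (intro eq_vecI) auto
next
  assume "v = 0\<^sub>v (dim_vec v)"
  then show "v \<bullet> v = 0" by (metis carrier_vec_dim_vec scalar_prod_left_zero)
qed

context
  fixes q :: "'a :: comm_ring_1 vec" and Q :: "'a mat" and m :: nat
  assumes q: "q \<in> carrier_vec (Suc m)" and Q: "Q \<in> carrier_mat (Suc m) m"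
begin

private abbreviation "P \<equiv> mat_of_cols (Suc m) (q # cols Q)"

private lemma frame_carrier: "P \<in> carrier_mat (Suc m) (Suc m)"
  using Q by auto

private lemma frame_col_0: "col P 0 = q"
  using q by simp

private lemma frame_col_Suc: "j < m \<Longrightarrow> col P (Suc j) = col Q j"
  using Q by (simp add: cols_def)

lemma orthogonal_frame_orthonormal:
  assumes orth: "transpose_mat P * P = 1\<^sub>m (Suc m)"
  shows "q \<bullet> q = 1" and "\<And>j. j < m \<Longrightarrow> q \<bullet> col Q j = 0"
    and "\<And>i j. i < m \<Longrightarrow> j < m \<Longrightarrow> col Q i \<bullet> col Q j = (if i = j then 1 else 0)"
proof -
  note orthonormal = orthogonal_mat_cols[OF frame_carrier orth]
  show "q \<bullet> q = 1" using orthonormal[of 0 0] frame_col_0 by simp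
  show "q \<bullet> col Q j = 0" if "j < m" for j
    using orthonormal[of 0 "Suc j"] that frame_col_0 frame_col_Suc by simp
  show "col Q i \<bullet> col Q j = (if i = j then 1 else 0)" if "i < m" "j < m" for i j
    using orthonormal[of "Suc i" "Suc j"] that frame_col_Suc by simp
qed

lemma det_deflate_eigenvector:
  assumes orth: "transpose_mat P * P = 1\<^sub>m (Suc m)"
    and M: "M \<in> carrier_mat (Suc m) (Suc m)" and eig: "M *\<^sub>v q = a \<cdot>\<^sub>v q"
  shows "det M = a * det (transpose_mat Q * M * Q)"
proof -
  note orthonormal = orthogonal_frame_orthonormal[OF orth]
  have QMQ: "dim_row (transpose_mat Q * M * Q) = m" "dim_col (transpose_mat Q * M * Q) = m"
    using Q M by auto
  let ?T = "four_block_mat (mat 1 1 (\<lambda>_. a)) (mat 1 m (\<lambda>(_, j). q \<bullet> (M *\<^sub>v col Q j)))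
              (0\<^sub>m m 1) (transpose_mat Q * M * Q)"
  have block: "transpose_mat P * M * P = ?T"
  proof (rule eq_matI)
    fix i j assume "i < dim_row ?T" "j < dim_col ?T"
    then have i: "i < Suc m" and j: "j < Suc m" using QMQ by auto
    have Mq: "col Q i' \<bullet> (M *\<^sub>v q) = 0" if "i' < m" for i'
    proof -
      have "col Q i' \<in> carrier_vec (Suc m)" using Q that by simp
      then show ?thesis
        using eig orthonormal(2)[OF that] comm_scalar_prod[OF q, of "col Q i'"] q by simp
    qed
    show "(transpose_mat P * M * P) $$ (i, j) = ?T $$ (i, j)"
      unfolding transpose_mult_mult_index[OF frame_carrier M frame_carrier i j]
    proof (cases i; cases j)
      assume "i = 0" "j = 0"
      then show "col P i \<bullet> (M *\<^sub>v col P j) = ?T $$ (i, j)"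
        using QMQ eig q orthonormal(1) by simp
    next
      fix j' assume "i = 0" "j = Suc j'"
      then show "col P i \<bullet> (M *\<^sub>v col P j) = ?T $$ (i, j)"
        using QMQ j by (simp add: frame_col_0 frame_col_Suc)
    next
      fix i' assume "i = Suc i'" "j = 0"
      then show "col P i \<bullet> (M *\<^sub>v col P j) = ?T $$ (i, j)"
        using QMQ i Mq by (simp add: frame_col_0 frame_col_Suc)
    next
      fix i' j' assume ij: "i = Suc i'" "j = Suc j'"
      then have "?T $$ (i, j) = (transpose_mat Q * M * Q) $$ (i', j')"
        using QMQ i j by simp
      then show "col P i \<bullet> (M *\<^sub>v col P j) = ?T $$ (i, j)"
        using i j ij transpose_mult_mult_index[OF Q M Q, of i' j'] by (simp add: frame_col_Suc)
    qed
  qed (use M QMQ in auto)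
  have PtP: "det (transpose_mat P) * det P = 1"
    using det_mult[of "transpose_mat P" "Suc m" P] frame_carrier orth by simp
  have "det M = det (transpose_mat P) * det M * det P"
    using PtP by (simp add: ac_simps)
  also have "\<dots> = det (transpose_mat P * M * P)"
    using frame_carrier M by (simp add: det_mult[of _ "Suc m"])
  also have "\<dots> = det (mat 1 1 (\<lambda>_. a)) * det (transpose_mat Q * M * Q)"
    unfolding block by (rule det_four_block_mat_lower_left_zero_col) (use QMQ in auto)
  also have "det (mat 1 1 (\<lambda>_. a)) = a" by (subst det_single) auto
  finally show ?thesis .
qed

end

lemma poly_char_poly_diff:
  fixes X Y :: "'a :: field mat"
  assumes X: "X \<in> carrier_mat n n" and Y: "Y \<in> carrier_mat n n"
  shows "poly (char_poly (X - Y)) s = det (s \<cdot>\<^sub>m 1\<^sub>m n - X + Y)"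
proof -
  have "- char_matrix (X - Y) s = s \<cdot>\<^sub>m 1\<^sub>m n - X + Y"
    unfolding char_matrix_def using X Y by (intro eq_matI) auto
  moreover have "X - Y \<in> carrier_mat n n" by (rule minus_carrier_mat[OF Y])
  ultimately show ?thesis using char_poly_matrix[of "X - Y" n s] by simp
qed

lemma colm_carrier [simp]: "v \<in> carrier_vec n \<Longrightarrow> colm v \<in> carrier_mat n 1"
  unfolding colm_def by auto

lemma rowm_carrier [simp]: "v \<in> carrier_vec n \<Longrightarrow> rowm v \<in> carrier_mat 1 n"
  unfolding rowm_def by auto

lemma colm_index [simp]: "i < dim_vec v \<Longrightarrow> colm v $$ (i, 0) = v $ i"
  unfolding colm_def by (simp add: mat_of_cols_def)

lemma colm_dims [simp]: "dim_row (colm v) = dim_vec v" "dim_col (colm v) = 1"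
  unfolding colm_def by auto

lemma rowm_dims [simp]: "dim_row (rowm v) = 1" "dim_col (rowm v) = dim_vec v"
  unfolding rowm_def by auto

lemma col_colm [simp]: "col (colm v) 0 = v"
  unfolding colm_def by (subst col_mat_of_cols) auto

lemma row_rowm [simp]: "row (rowm v) 0 = v"
  unfolding rowm_def by (subst mat_of_rows_row) auto

lemma colm_mult_vec:
  assumes "w \<in> carrier_vec 1"
  shows "colm v *\<^sub>v w = (w $ 0) \<cdot>\<^sub>v v"
  using assms unfolding colm_def
  by (intro eq_vecI) (auto simp: scalar_prod_def mat_of_cols_def row_def)

lemma mult_colm:
  assumes "M \<in> carrier_mat n n" "v \<in> carrier_vec n"
  shows "M * colm v = colm (M *\<^sub>v v)"
  using assms by (intro eq_matI) auto

lemma feedback_gain_eq: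
  fixes A :: "real mat"
  assumes A: "A \<in> carrier_mat n n" and B: "B \<in> carrier_vec n" and q: "q \<in> carrier_vec n"
    and BB: "B \<bullet> B \<noteq> 0" and shift: "(A - \<mu> \<cdot>\<^sub>m 1\<^sub>m n) *\<^sub>v q = c \<cdot>\<^sub>v B"
  shows "(1 / (B \<bullet> B)) \<cdot>\<^sub>m (rowm B * (A - \<mu> \<cdot>\<^sub>m 1\<^sub>m n) * colm q * rowm q) = c \<cdot>\<^sub>m rowm q"
proof -
  have Amu: "A - \<mu> \<cdot>\<^sub>m 1\<^sub>m n \<in> carrier_mat n n" by (rule minus_carrier_mat) simp
  have "rowm B * (A - \<mu> \<cdot>\<^sub>m 1\<^sub>m n) * colm q = rowm B * ((A - \<mu> \<cdot>\<^sub>m 1\<^sub>m n) * colm q)"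
    using B Amu q by (intro assoc_mult_mat) auto
  also have "\<dots> = rowm B * colm (c \<cdot>\<^sub>v B)"
    using mult_colm[OF Amu q] shift by simp
  also have "\<dots> = (c * (B \<bullet> B)) \<cdot>\<^sub>m 1\<^sub>m 1"
    using B by (intro eq_matI) auto
  finally show ?thesis
    using BB q by (intro eq_matI) (auto simp: scalar_prod_def)
qed

lemma closed_loop_mult_vec:
  fixes A :: "real mat"
  assumes A: "A \<in> carrier_mat n n" and B: "B \<in> carrier_vec n" and K: "K \<in> carrier_mat 1 n"
    and v: "v \<in> carrier_vec n"
  shows "(s \<cdot>\<^sub>m 1\<^sub>m n - A + colm B * K) *\<^sub>v v = s \<cdot>\<^sub>v v - A *\<^sub>v v + (K *\<^sub>v v) $ 0 \<cdot>\<^sub>v B"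
proof -
  have "(colm B * K) *\<^sub>v v = colm B *\<^sub>v (K *\<^sub>v v)"
    using B K v by (intro assoc_mult_mat_vec) auto
  also have "\<dots> = (K *\<^sub>v v) $ 0 \<cdot>\<^sub>v B"
    using K v by (intro colm_mult_vec) auto
  finally have "(colm B * K) *\<^sub>v v = (K *\<^sub>v v) $ 0 \<cdot>\<^sub>v B" .
  then show ?thesis
    using A B K v
    by (subst add_mult_distrib_mat_vec[of _ n n], force, force, force,
        subst minus_mult_distrib_mat_vec[of _ n n], force, force, force) (auto intro!: eq_vecI)
qed

context
  fixes A Q Kbar :: "real mat" and B q :: "real vec" and m :: nat and \<mu> c :: real
  assumes A: "A \<in> carrier_mat (Suc m) (Suc m)" and B: "B \<in> carrier_vec (Suc m)"
    and q: "q \<in> carrier_vec (Suc m)" and Q: "Q \<in> carrier_mat (Suc m) m"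
    and orth: "transpose_mat (mat_of_cols (Suc m) (q # cols Q)) * mat_of_cols (Suc m) (q # cols Q)
                 = 1\<^sub>m (Suc m)"
    and Kbar: "Kbar \<in> carrier_mat 1 m"
    and shift: "(A - \<mu> \<cdot>\<^sub>m 1\<^sub>m (Suc m)) *\<^sub>v q = c \<cdot>\<^sub>v B"
begin

private abbreviation "K \<equiv> c \<cdot>\<^sub>m rowm q + Kbar * transpose_mat Q"

private lemmas frame = orthogonal_frame_orthonormal[OF q Q orth]

private lemma gain_carrier: "K \<in> carrier_mat 1 (Suc m)"
  using q Q Kbar by auto

private lemma gain_mult_vec:
  assumes v: "v \<in> carrier_vec (Suc m)"
  shows "(K *\<^sub>v v) $ 0 = c * (q \<bullet> v) + row Kbar 0 \<bullet> (transpose_mat Q *\<^sub>v v)"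
  using q Q Kbar v by (subst add_mult_distrib_mat_vec[of _ 1 "Suc m"]) auto

private lemma transpose_mult_col: "j < m \<Longrightarrow> transpose_mat Q *\<^sub>v col Q j = unit_vec m j"
  using Q frame(3) by (intro eq_vecI) auto

private lemma closed_loop_carrier:
  "s \<cdot>\<^sub>m 1\<^sub>m (Suc m) - A + colm B * K \<in> carrier_mat (Suc m) (Suc m)"
  using A mult_carrier_mat[OF colm_carrier[OF B] gain_carrier] by auto

lemma closed_loop_eigenvector:
  "(s \<cdot>\<^sub>m 1\<^sub>m (Suc m) - A + colm B * K) *\<^sub>v q = (s - \<mu>) \<cdot>\<^sub>v q"
proof -
  have Qq: "transpose_mat Q *\<^sub>v q = 0\<^sub>v m"
    using Q q frame(2) comm_scalar_prod[OF q] by (intro eq_vecI) auto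
  have "row Kbar 0 \<in> carrier_vec m" using Kbar by auto
  then have "(K *\<^sub>v q) $ 0 = c"
    using gain_mult_vec[OF q] Qq frame(1) by simp
  moreover have "A *\<^sub>v q = \<mu> \<cdot>\<^sub>v q + c \<cdot>\<^sub>v B"
    using shift A q B
    by (auto intro!: eq_vecI simp: minus_mult_distrib_mat_vec[of _ "Suc m" "Suc m"]
        elim!: vec_eq_iff[THEN iffD1, elim_format])
  ultimately show ?thesis
    using closed_loop_mult_vec[OF A B gain_carrier q] q B by (auto intro!: eq_vecI simp: algebra_simps)
qed

lemma closed_loop_compress:
  "transpose_mat Q * (s \<cdot>\<^sub>m 1\<^sub>m (Suc m) - A + colm B * K) * Q
     = s \<cdot>\<^sub>m 1\<^sub>m m - transpose_mat Q * A * Q + transpose_mat Q * colm B * Kbar"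
  (is "transpose_mat Q * ?M * Q = ?N")
proof (rule eq_matI)
  fix i j assume "i < dim_row ?N" "j < dim_col ?N"
  then have i: "i < m" and j: "j < m" using Q Kbar by auto
  have Qi: "col Q i \<in> carrier_vec (Suc m)" and Qj: "col Q j \<in> carrier_vec (Suc m)"
    using Q i j by auto
  have "(K *\<^sub>v col Q j) $ 0 = Kbar $$ (0, j)"
    using gain_mult_vec[OF Qj] frame(2)[OF j] transpose_mult_col[OF j] Kbar j by simp
  then have "?M *\<^sub>v col Q j = s \<cdot>\<^sub>v col Q j - A *\<^sub>v col Q j + Kbar $$ (0, j) \<cdot>\<^sub>v B"
    using closed_loop_mult_vec[OF A B gain_carrier Qj] by simp
  moreover note closed_loop_carrier
  ultimately have "(transpose_mat Q * ?M * Q) $$ (i, j)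
      = col Q i \<bullet> (s \<cdot>\<^sub>v col Q j - A *\<^sub>v col Q j + Kbar $$ (0, j) \<cdot>\<^sub>v B)"
    using transpose_mult_mult_index[OF Q _ Q i j] by simp
  also have "\<dots> = s * (col Q i \<bullet> col Q j) - col Q i \<bullet> (A *\<^sub>v col Q j) + Kbar $$ (0, j) * (col Q i \<bullet> B)"
    using Qi Qj A B
    by (subst scalar_prod_add_distrib[of _ "Suc m"]) (auto simp: scalar_prod_minus_distrib[of _ "Suc m"])
  also have "\<dots> = ?N $$ (i, j)"
    using transpose_mult_mult_index[OF Q A Q i j] frame(3)[OF i j] i j Q B Kbar
    by (simp add: scalar_prod_def)
  finally show "(transpose_mat Q * ?M * Q) $$ (i, j) = ?N $$ (i, j)" .
qed (use Q Kbar in auto)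

lemma det_closed_loop:
  "det (s \<cdot>\<^sub>m 1\<^sub>m (Suc m) - A + colm B * K)
     = (s - \<mu>) * det (s \<cdot>\<^sub>m 1\<^sub>m m - transpose_mat Q * A * Q + transpose_mat Q * colm B * Kbar)"
  using det_deflate_eigenvector[OF q Q orth closed_loop_carrier closed_loop_eigenvector]
  unfolding closed_loop_compress .

lemma char_poly_closed_loop:
  "char_poly (A - colm B * K)
     = [:- \<mu>, 1:] * char_poly (transpose_mat Q * A * Q - transpose_mat Q * colm B * Kbar)"
proof (rule poly_eq_poly_eq_iff[THEN iffD1, OF ext])
  fix s
  have QAQ: "transpose_mat Q * A * Q \<in> carrier_mat m m"
    and QBK: "transpose_mat Q * colm B * Kbar \<in> carrier_mat m m"
    using Q A B Kbar by auto
  have "poly (char_poly (A - colm B * K)) s = det (s \<cdot>\<^sub>m 1\<^sub>m (Suc m) - A + colm B * K)"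
    by (rule poly_char_poly_diff[OF A mult_carrier_mat[OF colm_carrier[OF B] gain_carrier]])
  also have "\<dots> = (s - \<mu>) * det (s \<cdot>\<^sub>m 1\<^sub>m m - transpose_mat Q * A * Q + transpose_mat Q * colm B * Kbar)"
    by (rule det_closed_loop)
  also have "\<dots> = poly ([:- \<mu>, 1:] * char_poly (transpose_mat Q * A * Q - transpose_mat Q * colm B * Kbar)) s"
    by (simp add: poly_char_poly_diff[OF QAQ QBK] algebra_simps)
  finally show "poly (char_poly (A - colm B * K)) s
      = poly ([:- \<mu>, 1:] * char_poly (transpose_mat Q * A * Q - transpose_mat Q * colm B * Kbar)) s" .
qed

end

theorem mainTheorem11:
  fixes n :: nat and A Q Kbar :: "real mat" and B q :: "real vec" and \<mu> :: real
    and lam :: "nat \<Rightarrow> complex"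
  assumes n: "n \<ge> 2"
    and A: "A \<in> carrier_mat n n"
    and B: "B \<in> carrier_vec n" and B0: "B \<noteq> 0\<^sub>v n"
    and q: "q \<in> carrier_vec n" and q_unit: "q \<bullet> q = 1"
    and q_span: "\<exists>c. (A - \<mu> \<cdot>\<^sub>m 1\<^sub>m n) *\<^sub>v q = c \<cdot>\<^sub>v B"
    and Q: "Q \<in> carrier_mat n (n - 1)"
    and orth: "transpose_mat (mat_of_cols n (q # cols Q)) * mat_of_cols n (q # cols Q) = 1\<^sub>m n"
    and Kbar: "Kbar \<in> carrier_mat 1 (n - 1)"
  shows
    "(let Abar = transpose_mat Q * A * Q;
          Bbar = transpose_mat Q * colm B;
          Ko = (1 / (B \<bullet> B)) \<cdot>\<^sub>m (rowm B * (A - \<mu> \<cdot>\<^sub>m 1\<^sub>m n) * colm q * rowm q);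
          K = Ko + Kbar * transpose_mat Q
      in (\<forall>s::real. det (s \<cdot>\<^sub>m 1\<^sub>m n - A + colm B * K)
                   = (s - \<mu>) * det (s \<cdot>\<^sub>m 1\<^sub>m (n - 1) - Abar + Bbar * Kbar))
       \<and> (map_poly complex_of_real (char_poly (Abar - Bbar * Kbar))
              = (\<Prod>i\<in>{2..n}. [:- lam i, 1:])
          \<longrightarrow> map_poly complex_of_real (char_poly (A - colm B * K))
              = [:- complex_of_real \<mu>, 1:] * (\<Prod>i\<in>{2..n}. [:- lam i, 1:])))"
proof -
  \<comment> \<open>\<open>q_unit\<close> is the (0,0) entry of \<open>orth\<close> and is not needed separately.\<close>
  obtain c where shift: "(A - \<mu> \<cdot>\<^sub>m 1\<^sub>m n) *\<^sub>v q = c \<cdot>\<^sub>v B" using q_span by blast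
  obtain m where m: "n = Suc m" using n by (cases n) auto
  have "B \<bullet> B \<noteq> 0" using B B0 scalar_prod_self_eq_0_iff[of B] by auto
  note Ko = feedback_gain_eq[OF A B q this shift]
  note hyps = A B q Q orth Kbar shift
  interpret complex_hom: map_poly_comm_ring_hom complex_of_real ..
  show ?thesis
    unfolding Let_def Ko
  proof (intro conjI allI impI)
    fix s
    show "det (s \<cdot>\<^sub>m 1\<^sub>m n - A + colm B * (c \<cdot>\<^sub>m rowm q + Kbar * transpose_mat Q))
        = (s - \<mu>) * det (s \<cdot>\<^sub>m 1\<^sub>m (n - 1) - transpose_mat Q * A * Q + transpose_mat Q * colm B * Kbar)"
      using det_closed_loop[OF hyps[unfolded m diff_Suc_1]] by (simp add: m)
  next
    assume "map_poly complex_of_real (char_poly (transpose_mat Q * A * Q - transpose_mat Q * colm B * Kbar))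
        = (\<Prod>i\<in>{2..n}. [:- lam i, 1:])"
    then show "map_poly complex_of_real (char_poly (A - colm B * (c \<cdot>\<^sub>m rowm q + Kbar * transpose_mat Q)))
        = [:- complex_of_real \<mu>, 1:] * (\<Prod>i\<in>{2..n}. [:- lam i, 1:])"
      unfolding char_poly_closed_loop[OF hyps[unfolded m diff_Suc_1]] complex_hom.hom_mult by simp
  qed
qed

end
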